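(* Let $A$ be a finite abelian group. A subgroup inclusion $X\subseteq A$ is a cellular cover of $A$ if and only if $X$ is the $k$-torsion subgroup $\{x\in A: kx=0\}$ of $A$ for some positive integer $k$. Moreover every cellular cover of $A$ is equivalent to such an inclusion, so $\mathrm{Cov}(A)$ is in bijection with the set of subgroups of $A$ of the form $\{x\in A:kx=0\}$, $k\ge1$.
   Context: A cellular cover of $A$ is a homomorphism $c:X\to A$ such that $\mathrm{Hom}(X,X)\to\mathrm{Hom}(X,A)$, $f\mapsto cf$, is bijective; two cellular covers $c:X\to A$, $d:Y\to A$ are equivalent if $dh=c$ for some isomorphism $h:X\to Y$, and $\mathrm{Cov}(A)$ is the set of equivalence classes. (For finitely generated nilpotent groups such covers are injective, so they are equivalent to subgroup inclusions.) *)

theory Defs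
  imports "HOL-Algebra.Algebra"
begin

text \<open>Since HOL-Algebra homomorphisms are arbitrary
  functions (not extensional), homomorphisms are identified with their restriction
  to the carrier of B, i.e. we work with the extensional homomorphisms.\<close>
definition cellular_cover ::
  "('b, 'm) monoid_scheme \<Rightarrow> ('a, 'n) monoid_scheme \<Rightarrow> ('b \<Rightarrow> 'a) \<Rightarrow> bool" where
  "cellular_cover B A c \<longleftrightarrow>
     c \<in> hom B A \<and>
     bij_betw (\<lambda>f. restrict (\<lambda>x. c (f x)) (carrier B))
       (hom B B \<inter> extensional (carrier B))
       (hom B A \<inter> extensional (carrier B))"

definition torsion_subgroup :: "('a, 'n) monoid_scheme \<Rightarrow> nat \<Rightarrow> 'a set" where
  "torsion_subgroup A k = {x \<in> carrier A. x [^]\<^bsub>A\<^esub> k = \<one>\<^bsub>A\<^esub>}"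

end

theory Submission
  imports Defs
begin

(*
  The key algebraic fact is a splitting lemma: if an abelian group G has exponent k and
  h in G has order exactly k, then there is a character r : G -> Z/k with r h = 1, so the
  cyclic group generated by h is a direct summand.  It is proved by extending partial
  characters one element at a time and applying Zorn's lemma (G need not be finite: it
  is applied to the domain of an arbitrary cover before that is known to be finite).
  Consequently a homomorphism out of G may send h to any element a with a^k = 1.

  Together with the existence of an element whose order is the exponent, this shows that
  a finite subgroup H of A is closed under all homomorphisms H -> A iff H is a torsion
  subgroup {x. x^k = 1}.  For an inclusion H <= A the cellular cover condition is exactly
  this closure property, which gives the first half of the theorem.  For an arbitrary
  cover c : B -> A we show that B is abelian, that c is injective (using the splitting
  lemma inside B) and that c(B) is closed under homomorphisms; hence c is an isomorphism
  onto a torsion subgroup of A.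
*)

lemma (in comm_group) ord_mult_coprime:
  assumes x: "x \<in> carrier G" and y: "y \<in> carrier G" and cop: "coprime (ord x) (ord y)"
  shows "ord (x \<otimes> y) = ord x * ord y"
proof -
  let ?t = "ord (x \<otimes> y)"
  have t: "x [^] ?t \<otimes> y [^] ?t = \<one>"
    using x y by (metis nat_pow_distrib pow_ord_eq_1 m_closed)
  have kill: "a [^] (?t * ord b) = \<one>"
    if a: "a \<in> carrier G" and b: "b \<in> carrier G" and ab: "a [^] ?t \<otimes> b [^] ?t = \<one>" for a b
  proof -
    have "(a [^] ?t) [^] ord b \<otimes> (b [^] ?t) [^] ord b = \<one>"
      using ab a b by (metis nat_pow_distrib nat_pow_closed nat_pow_one)
    moreover have "(b [^] ?t) [^] ord b = \<one>"
      using b by (metis nat_pow_one nat_pow_pow pow_ord_eq_1 mult.commute)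
    ultimately show ?thesis using a by (simp add: nat_pow_pow)
  qed
  have "ord x dvd ?t * ord y" using kill[OF x y t] pow_eq_id x by blast
  hence dx: "ord x dvd ?t" using cop by (simp add: coprime_dvd_mult_left_iff)
  have "y [^] ?t \<otimes> x [^] ?t = \<one>" using t x y by (simp add: m_comm)
  hence "ord y dvd ?t * ord x" using kill[OF y x] pow_eq_id y by blast
  hence dy: "ord y dvd ?t" using cop by (simp add: coprime_dvd_mult_left_iff coprime_commute)
  have "ord x * ord y dvd ?t" using dx dy cop by (simp add: divides_mult)
  moreover have "?t dvd ord x * ord y" by (rule abelian_ord_mul_divides[OF x y])
  ultimately show ?thesis by (metis dvd_antisym)
qed

text \<open>In an abelian group of finite exponent some element has maximal order, and its order
  is the exponent: otherwise a prime power dividing the order of another element but not the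
  maximal order could be combined with the maximal element into an element of larger order.\<close>
lemma (in comm_group) exponent_attained:
  fixes n :: nat
  assumes n: "n > 0" and ex: "\<forall>x\<in>carrier G. x [^] n = \<one>"
  shows "\<exists>h\<in>carrier G. \<forall>x\<in>carrier G. x [^] ord h = \<one>"
proof -
  have ordn: "ord x dvd n" if "x \<in> carrier G" for x using ex that pow_eq_id by blast
  have ordpos: "ord x > 0" if "x \<in> carrier G" for x
    using ordn[OF that] n by (metis dvd_0_left_iff gr0I)
  have fin: "finite (ord ` carrier G)"
    using ordn n by (meson dvd_imp_le finite_atMost finite_subset image_subsetI atMost_iff)
  define N where "N = Max (ord ` carrier G)"
  obtain h where h: "h \<in> carrier G" "ord h = N"
    using Max_in[OF fin] N_def by (metis empty_iff image_empty image_iff one_closed)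
  have maxN: "ord z \<le> N" if "z \<in> carrier G" for z using Max_ge[OF fin] that N_def by auto
  have "ord x dvd N" if x: "x \<in> carrier G" for x
  proof (rule ccontr)
    assume nd: "\<not> ord x dvd N"
    have Npos: "N > 0" using ordpos h by auto
    have ax: "ord x \<noteq> 0" using ordpos[OF x] by simp
    obtain p where p: "Factorial_Ring.prime p" "multiplicity p (ord x) > multiplicity p N"
      using nd multiplicity_le_imp_dvd[OF ax] by (meson not_le)
    define e where "e = multiplicity p (ord x)"
    define f where "f = multiplicity p N"
    have pe: "p ^ e dvd ord x" unfolding e_def by (rule multiplicity_dvd)
    have pf: "p ^ f dvd N" unfolding f_def by (rule multiplicity_dvd)
    have p1: "p > 1" using p prime_gt_1_nat by blast
    define x' where "x' = x [^] (ord x div p ^ e)"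
    define h' where "h' = h [^] (p ^ f)"
    have x'c: "x' \<in> carrier G" and h'c: "h' \<in> carrier G" using x h x'_def h'_def by auto
    have ox': "ord x' = p ^ e"
    proof -
      have d: "ord x div p ^ e dvd ord x" using pe by (metis dvd_div_mult_self dvd_triv_left)
      have nz: "ord x div p ^ e \<noteq> 0" using pe ax by (metis dvd_div_eq_0_iff)
      have "ord x' = ord x div (ord x div p ^ e)" unfolding x'_def using ord_pow[OF x d nz] .
      also have "\<dots> = p ^ e" using pe ax
        by (metis dvd_div_mult_self nonzero_mult_div_cancel_left div_0 mult_zero_left)
      finally show ?thesis .
    qed
    have oh': "ord h' = N div p ^ f"
      unfolding h'_def using ord_pow[OF h(1)] h(2) pf p1 by simp
    have "\<not> p dvd N div p ^ f"
      unfolding f_def using multiplicity_decompose[of N p] Npos p1 by simp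
    hence cop: "coprime (p ^ e) (N div p ^ f)"
      using p(1) by (simp add: prime_imp_coprime coprime_power_left_iff)
    have "ord (x' \<otimes> h') = p ^ e * (N div p ^ f)"
      using ord_mult_coprime[OF x'c h'c] ox' oh' cop by simp
    also have "\<dots> = p ^ (e - f) * N"
    proof -
      have "e = f + (e - f)" using p(2) e_def f_def by auto
      hence "p ^ e * (N div p ^ f) = p ^ (e - f) * (p ^ f * (N div p ^ f))"
        by (metis power_add mult.assoc mult.commute)
      thus ?thesis using pf by simp
    qed
    also have "\<dots> > N"
    proof -
      have "p ^ (e - f) > 1" using p1 p(2) e_def f_def one_less_power[of p "e - f"] by simp
      thus ?thesis using Npos by simp
    qed
    finally show False using maxN[of "x' \<otimes> h'"] x'c h'c by simp
  qed
  hence "\<forall>x\<in>carrier G. x [^] ord h = \<one>" using h pow_eq_id by auto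
  thus ?thesis using h by blast
qed

lemma (in group) pow_eq_iff_mod:
  assumes x: "x \<in> carrier G"
  shows "x [^] (i::nat) = x [^] (j::nat) \<longleftrightarrow> i mod ord x = j mod ord x"
proof -
  have "x [^] i = x [^] j \<longleftrightarrow> x [^] (int i) = x [^] (int j)" by (simp add: int_pow_int)
  also have "\<dots> \<longleftrightarrow> int (ord x) dvd (int j - int i)" using int_pow_eq[OF x] .
  also have "\<dots> \<longleftrightarrow> int j mod int (ord x) = int i mod int (ord x)" by (simp add: mod_eq_dvd_iff)
  also have "\<dots> \<longleftrightarrow> j mod ord x = i mod ord x" by (simp flip: of_nat_mod)
  finally show ?thesis by auto
qed

lemma (in group) pow_mod_exp:
  assumes x: "x \<in> carrier G" and e: "x [^] k = \<one>"
  shows "x [^] (i::nat) = x [^] (i mod k)"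
proof -
  have "x [^] i = x [^] (k * (i div k) + i mod k)" by simp
  also have "\<dots> = (x [^] k) [^] (i div k) \<otimes> x [^] (i mod k)"
    using nat_pow_mult[OF x, of "k * (i div k)" "i mod k"] nat_pow_pow[OF x] by simp
  finally show ?thesis using e x by simp
qed

text \<open>Adding \<open>(k - 1) * u\<close>, an additive inverse of \<open>u\<close> modulo \<open>k\<close>, can be undone.\<close>
lemma mod_add_inverse_cancel:
  fixes k u u' d c j :: nat
  assumes k: "k > 0" and hyp: "(((k - 1) * u) mod k + u') mod k = (d * c) mod k"
  shows "(u + (j + d) * c) mod k = (u' + j * c) mod k"
proof -
  have "(u + (j + d) * c) mod k = (u + j * c + (d * c) mod k) mod k"
    by (metis mod_add_right_eq add.assoc distrib_right)
  also have "\<dots> = (u + j * c + (((k - 1) * u) mod k + u') mod k) mod k" using hyp by simp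
  also have "\<dots> = (u + j * c + (((k - 1) * u) + u')) mod k"
    by (metis mod_add_right_eq mod_add_left_eq)
  also have "\<dots> = (u + (k - 1) * u + (u' + j * c)) mod k"
    by (simp add: algebra_simps)
  also have "u + (k - 1) * u = k * u" using k by (cases k) auto
  also have "(k * u + (u' + j * c)) mod k = (u' + j * c) mod k" by simp
  finally show ?thesis .
qed

locale exponent_generator = comm_group G for G (structure) +
  fixes k :: nat and h :: 'a
  assumes k_pos: "0 < k"
    and exponent: "x \<in> carrier G \<Longrightarrow> x [^] k = \<one>"
    and gen_closed: "h \<in> carrier G"
    and ord_gen: "ord h = k"
begin

text \<open>Graphs of partial characters: homomorphisms from a subgroup of \<open>G\<close> to \<open>\<int>/k\<close>
  (represented by \<open>{..<k}\<close> with addition modulo \<open>k\<close>) sending \<open>h\<close> to \<open>1\<close>.\<close>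
definition char_graph :: "('a \<times> nat) set \<Rightarrow> bool" where
  "char_graph \<Gamma> \<longleftrightarrow> \<Gamma> \<subseteq> carrier G \<times> {..<k} \<and> (h, 1 mod k) \<in> \<Gamma> \<and>
      (\<forall>x u v. (x, u) \<in> \<Gamma> \<longrightarrow> (x, v) \<in> \<Gamma> \<longrightarrow> u = v) \<and>
      (\<forall>x u y v. (x, u) \<in> \<Gamma> \<longrightarrow> (y, v) \<in> \<Gamma> \<longrightarrow> (x \<otimes> y, (u + v) mod k) \<in> \<Gamma>)"

lemma graph_closed: "char_graph \<Gamma> \<Longrightarrow> (x, u) \<in> \<Gamma> \<Longrightarrow> x \<in> carrier G \<and> u < k"
  unfolding char_graph_def by auto

lemma graph_functional: "char_graph \<Gamma> \<Longrightarrow> (x, u) \<in> \<Gamma> \<Longrightarrow> (x, v) \<in> \<Gamma> \<Longrightarrow> u = v"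
  unfolding char_graph_def by blast

lemma graph_mult:
  "char_graph \<Gamma> \<Longrightarrow> (x, u) \<in> \<Gamma> \<Longrightarrow> (y, v) \<in> \<Gamma> \<Longrightarrow> (x \<otimes> y, (u + v) mod k) \<in> \<Gamma>"
  unfolding char_graph_def by blast

lemma graph_gen: "char_graph \<Gamma> \<Longrightarrow> (h, 1 mod k) \<in> \<Gamma>"
  unfolding char_graph_def by blast

lemma graph_pow_Suc:
  assumes \<Gamma>: "char_graph \<Gamma>" and xu: "(x, u) \<in> \<Gamma>"
  shows "(x [^] Suc n, (Suc n * u) mod k) \<in> \<Gamma>"
proof (induction n)
  case 0
  show ?case using xu graph_closed[OF \<Gamma> xu] by simp
next
  case (Suc n)
  have "(x [^] Suc n \<otimes> x, ((Suc n * u) mod k + u) mod k) \<in> \<Gamma>"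
    by (rule graph_mult[OF \<Gamma> Suc xu])
  moreover have "((Suc n * u) mod k + u) mod k = (Suc (Suc n) * u) mod k"
    by (simp add: mod_simps algebra_simps)
  ultimately show ?case by simp
qed

lemma graph_one:
  assumes \<Gamma>: "char_graph \<Gamma>" shows "(\<one>, 0) \<in> \<Gamma>"
proof -
  have "(h [^] Suc (k - 1), (Suc (k - 1) * (1 mod k)) mod k) \<in> \<Gamma>"
    by (rule graph_pow_Suc[OF \<Gamma> graph_gen[OF \<Gamma>]])
  thus ?thesis using k_pos exponent gen_closed by simp
qed

lemma graph_pow:
  assumes \<Gamma>: "char_graph \<Gamma>" and xu: "(x, u) \<in> \<Gamma>"
  shows "(x [^] n, (n * u) mod k) \<in> \<Gamma>"
  using graph_one[OF \<Gamma>] graph_pow_Suc[OF \<Gamma> xu] by (cases n) auto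

lemma graph_inv:
  assumes \<Gamma>: "char_graph \<Gamma>" and xu: "(x, u) \<in> \<Gamma>"
  shows "(inv x, ((k - 1) * u) mod k) \<in> \<Gamma>"
proof -
  have x: "x \<in> carrier G" using graph_closed[OF \<Gamma> xu] by simp
  have "x [^] (k - 1) \<otimes> x = \<one>" using exponent[OF x] k_pos by (metis Suc_diff_1 nat_pow_Suc)
  hence "inv x = x [^] (k - 1)" using x by (simp add: inv_equality)
  thus ?thesis using graph_pow[OF \<Gamma> xu, of "k - 1"] by simp
qed

lemma cyclic_char_graph: "char_graph {(h [^] (i::nat), i mod k) | i. True}"
  unfolding char_graph_def
proof (intro conjI allI impI)
  show "{(h [^] (i::nat), i mod k) | i. True} \<subseteq> carrier G \<times> {..<k}"
    using gen_closed k_pos by auto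
  show "(h, 1 mod k) \<in> {(h [^] (i::nat), i mod k) | i. True}"
    using gen_closed by (auto intro!: exI[of _ "1::nat"])
next
  fix x u v assume "(x, u) \<in> {(h [^] (i::nat), i mod k) | i. True}"
    "(x, v) \<in> {(h [^] (i::nat), i mod k) | i. True}"
  then obtain i j where "x = h [^] (i::nat)" "u = i mod k" "x = h [^] (j::nat)" "v = j mod k"
    by blast
  thus "u = v" using pow_eq_iff_mod[OF gen_closed] ord_gen by simp
next
  fix x u y v assume "(x, u) \<in> {(h [^] (i::nat), i mod k) | i. True}"
    "(y, v) \<in> {(h [^] (i::nat), i mod k) | i. True}"
  then obtain i j where ij: "x = h [^] (i::nat)" "u = i mod k" "y = h [^] (j::nat)" "v = j mod k"
    by blast
  have "x \<otimes> y = h [^] (i + j)" using ij gen_closed by (simp add: nat_pow_mult)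
  moreover have "(u + v) mod k = (i + j) mod k" using ij by (simp add: mod_simps)
  ultimately show "(x \<otimes> y, (u + v) mod k) \<in> {(h [^] (i::nat), i mod k) | i. True}" by blast
qed

lemma chain_union_char_graph:
  assumes C: "C \<in> chains {\<Gamma>. char_graph \<Gamma>}" and ne: "C \<noteq> {}"
  shows "char_graph (\<Union>C)"
proof -
  have CP: "char_graph \<Gamma>" if "\<Gamma> \<in> C" for \<Gamma> using chainsD2[OF C] that by auto
  have common: "\<exists>\<Gamma>\<in>C. p \<in> \<Gamma> \<and> q \<in> \<Gamma>" if pq: "p \<in> \<Union>C" "q \<in> \<Union>C" for p q
  proof -
    obtain \<Gamma>1 \<Gamma>2 where "\<Gamma>1 \<in> C" "\<Gamma>2 \<in> C" "p \<in> \<Gamma>1" "q \<in> \<Gamma>2" using pq by blast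
    thus ?thesis using chainsD[OF C, of \<Gamma>1 \<Gamma>2] by blast
  qed
  show ?thesis
    unfolding char_graph_def
  proof (intro conjI allI impI)
    show "\<Union>C \<subseteq> carrier G \<times> {..<k}" using CP unfolding char_graph_def by blast
    show "(h, 1 mod k) \<in> \<Union>C" using CP graph_gen ne by blast
  next
    fix x u v assume "(x, u) \<in> \<Union>C" "(x, v) \<in> \<Union>C"
    then obtain \<Gamma> where "\<Gamma> \<in> C" "(x, u) \<in> \<Gamma>" "(x, v) \<in> \<Gamma>" using common by blast
    thus "u = v" using CP graph_functional by blast
  next
    fix x u y v assume "(x, u) \<in> \<Union>C" "(y, v) \<in> \<Union>C"
    then obtain \<Gamma> where "\<Gamma> \<in> C" "(x, u) \<in> \<Gamma>" "(y, v) \<in> \<Gamma>" using common by blast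
    thus "(x \<otimes> y, (u + v) mod k) \<in> \<Union>C" using CP graph_mult by blast
  qed
qed

text \<open>The domain of a partial character is a subgroup; along the powers of a fixed element
  \<open>x\<close> it is cut out by a least positive exponent \<open>m\<close>, and the values there are forced to be
  multiples of a single residue \<open>c\<close> (the value that \<open>x\<close> itself may consistently receive).\<close>
lemma graph_values_on_powers:
  assumes M: "char_graph M" and x: "x \<in> carrier G"
  shows "\<exists>c. \<forall>i v. (x [^] (i::nat), v) \<in> M \<longrightarrow> v = (i * c) mod k"
proof -
  have D_mult: "a \<otimes> b \<in> Domain M" if "a \<in> Domain M" "b \<in> Domain M" for a b
    using that graph_mult[OF M] by blast
  have D_inv: "inv a \<in> Domain M" if "a \<in> Domain M" for a
    using that graph_inv[OF M] by blast
  have D_pow: "a [^] (n::nat) \<in> Domain M" if "a \<in> Domain M" for a n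
    using that graph_pow[OF M] by blast
  define m where "m = (LEAST m::nat. 0 < m \<and> x [^] m \<in> Domain M)"
  have "0 < k \<and> x [^] k \<in> Domain M" using k_pos exponent[OF x] graph_one[OF M] by auto
  hence "0 < m \<and> x [^] m \<in> Domain M" unfolding m_def by (rule LeastI)
  hence m: "0 < m" "x [^] m \<in> Domain M" by auto
  have m_dvd: "m dvd i" if i: "x [^] i \<in> Domain M" for i
  proof -
    have "x [^] i = x [^] (m * (i div m)) \<otimes> x [^] (i mod m)"
      using x by (simp add: nat_pow_mult)
    hence "inv (x [^] (m * (i div m))) \<otimes> x [^] i = x [^] (i mod m)"
      using x by (simp add: m_assoc[symmetric])
    moreover have "x [^] (m * (i div m)) \<in> Domain M"
      using D_pow[OF m(2)] x by (simp add: nat_pow_pow)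
    ultimately have r: "x [^] (i mod m) \<in> Domain M" using D_mult[OF D_inv i] by metis
    have "\<not> (0 < i mod m \<and> x [^] (i mod m) \<in> Domain M)"
      using not_less_Least[of "i mod m" "\<lambda>m. 0 < m \<and> x [^] m \<in> Domain M"] m(1) m_def by auto
    thus ?thesis using r by auto
  qed
  obtain w where w: "(x [^] m, w) \<in> M" using m(2) by blast
  have "m dvd k" using m_dvd exponent[OF x] graph_one[OF M] by (metis Domain.DomainI)
  then obtain q where kq: "k = m * q" by blast
  have "((x [^] m) [^] q, (q * w) mod k) \<in> M" by (rule graph_pow[OF M w])
  moreover have "(x [^] m) [^] q = \<one>" using x exponent[OF x] kq by (simp add: nat_pow_pow)
  ultimately have "(q * w) mod k = 0" using graph_functional[OF M _ graph_one[OF M]] by simp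
  hence "m * q dvd q * w" using kq by (simp add: mod_eq_0_iff_dvd)
  hence "m dvd w" using kq k_pos by (simp add: mult.commute)
  then obtain c where c: "w = m * c" by blast
  have "v = (i * c) mod k" if iv: "(x [^] i, v) \<in> M" for i v
  proof -
    obtain t where t: "i = m * t" using m_dvd iv by blast
    have "((x [^] m) [^] t, (t * w) mod k) \<in> M" by (rule graph_pow[OF M w])
    hence "(x [^] i, (t * w) mod k) \<in> M" using t x by (simp add: nat_pow_pow)
    hence "v = (t * w) mod k" using graph_functional[OF M iv] by blast
    thus ?thesis using t c by (simp add: algebra_simps)
  qed
  thus ?thesis by blast
qed

text \<open>Adjoining an element \<open>x\<close> with value \<open>c\<close> extends a partial character by
  \<open>s \<otimes> x\<^sup>i \<mapsto> u + i c\<close>; this is well defined because on the powers of \<open>x\<close> already in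
  the domain the character takes the values \<open>i c\<close>.\<close>
lemma extension_well_defined:
  assumes M: "char_graph M" and x: "x \<in> carrier G"
    and V: "\<And>i v. (x [^] (i::nat), v) \<in> M \<Longrightarrow> v = (i * c) mod k"
    and su: "(s, u) \<in> M" "(s', u') \<in> M"
    and eq: "s \<otimes> x [^] i = s' \<otimes> x [^] j" and ji: "j \<le> (i::nat)"
  shows "(u + i * c) mod k = (u' + j * c) mod k"
proof -
  define d where "d = i - j"
  have i: "i = j + d" using ji d_def by simp
  have sc: "s \<in> carrier G" "s' \<in> carrier G" using su graph_closed[OF M] by auto
  have "s \<otimes> x [^] d \<otimes> x [^] j = s' \<otimes> x [^] j"
    using eq i x sc by (simp add: m_assoc nat_pow_mult add.commute)
  hence "s \<otimes> x [^] d = s'" using x sc by simp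
  hence "x [^] d = inv s \<otimes> s'" using x sc by (metis inv_solve_left nat_pow_closed)
  moreover have "(inv s \<otimes> s', (((k - 1) * u) mod k + u') mod k) \<in> M"
    by (rule graph_mult[OF M graph_inv[OF M su(1)] su(2)])
  ultimately have "(((k - 1) * u) mod k + u') mod k = (d * c) mod k" using V by simp
  from mod_add_inverse_cancel[OF k_pos this] show ?thesis using i by simp
qed

lemma extension_char_graph:
  assumes M: "char_graph M" and x: "x \<in> carrier G"
    and V: "\<And>i v. (x [^] (i::nat), v) \<in> M \<Longrightarrow> v = (i * c) mod k"
  shows "char_graph {(s \<otimes> x [^] (i::nat), (u + i * c) mod k) | s u i. (s, u) \<in> M}"
    (is "char_graph ?M'")
  unfolding char_graph_def
proof (intro conjI allI impI)
  show "?M' \<subseteq> carrier G \<times> {..<k}" using graph_closed[OF M] x k_pos by auto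
  have "(h \<otimes> x [^] (0::nat), (1 mod k + 0 * c) mod k) \<in> ?M'" using graph_gen[OF M] by blast
  moreover have "h \<otimes> x [^] (0::nat) = h" using gen_closed by simp
  moreover have "(1 mod k + 0 * c) mod k = 1 mod k" by simp
  ultimately show "(h, 1 mod k) \<in> ?M'" by metis
next
  fix y u v assume "(y, u) \<in> ?M'" "(y, v) \<in> ?M'"
  then obtain s1 u1 i1 s2 u2 i2 where
    b: "(s1, u1) \<in> M" "y = s1 \<otimes> x [^] (i1::nat)" "u = (u1 + i1 * c) mod k"
       "(s2, u2) \<in> M" "y = s2 \<otimes> x [^] (i2::nat)" "v = (u2 + i2 * c) mod k"
    by blast
  show "u = v"
  proof (cases "i2 \<le> i1")
    case True
    thus ?thesis using extension_well_defined[OF M x V b(1) b(4)] b by simp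
  next
    case False
    thus ?thesis using extension_well_defined[OF M x V b(4) b(1)] b by simp
  qed
next
  fix y u z v assume "(y, u) \<in> ?M'" "(z, v) \<in> ?M'"
  then obtain s1 u1 i1 s2 u2 i2 where
    b: "(s1, u1) \<in> M" "y = s1 \<otimes> x [^] (i1::nat)" "u = (u1 + i1 * c) mod k"
       "(s2, u2) \<in> M" "z = s2 \<otimes> x [^] (i2::nat)" "v = (u2 + i2 * c) mod k"
    by blast
  have sc: "s1 \<in> carrier G" "s2 \<in> carrier G" using b graph_closed[OF M] by auto
  have "(s1 \<otimes> s2 \<otimes> x [^] (i1 + i2), ((u1 + u2) mod k + (i1 + i2) * c) mod k) \<in> ?M'"
    using graph_mult[OF M b(1) b(4)] by blast
  moreover have "s1 \<otimes> s2 \<otimes> x [^] (i1 + i2) = y \<otimes> z"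
    using b sc x by (simp add: nat_pow_mult[symmetric] m_ac)
  moreover have "((u1 + u2) mod k + (i1 + i2) * c) mod k = (u + v) mod k"
  proof -
    have "((u1 + u2) mod k + (i1 + i2) * c) mod k = (u1 + u2 + (i1 + i2) * c) mod k"
      by (simp add: mod_add_left_eq)
    also have "\<dots> = ((u1 + i1 * c) + (u2 + i2 * c)) mod k"
      by (simp add: algebra_simps)
    also have "\<dots> = (u + v) mod k" using b(3,6) by (simp add: mod_add_eq)
    finally show ?thesis .
  qed
  ultimately show "(y \<otimes> z, (u + v) mod k) \<in> ?M'" by simp
qed

lemma graph_extend:
  assumes M: "char_graph M" and x: "x \<in> carrier G"
  shows "\<exists>M'. char_graph M' \<and> M \<subseteq> M' \<and> x \<in> Domain M'"
proof -
  obtain c where V: "\<And>i v. (x [^] (i::nat), v) \<in> M \<Longrightarrow> v = (i * c) mod k"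
    using graph_values_on_powers[OF M x] by blast
  define M' where "M' = {(s \<otimes> x [^] (i::nat), (u + i * c) mod k) | s u i. (s, u) \<in> M}"
  have "M \<subseteq> M'"
  proof
    fix p assume p: "p \<in> M"
    then obtain s u where su: "p = (s, u)" "(s, u) \<in> M" by (cases p) auto
    have "(s \<otimes> x [^] (0::nat), (u + 0 * c) mod k) \<in> M'" using su M'_def by blast
    thus "p \<in> M'" using su graph_closed[OF M su(2)] by simp
  qed
  moreover have "(\<one> \<otimes> x [^] (1::nat), (0 + 1 * c) mod k) \<in> M'"
    using graph_one[OF M] M'_def by blast
  hence "x \<in> Domain M'" using x by auto
  ultimately show ?thesis using extension_char_graph[OF M x V] M'_def by blast
qed

text \<open>By Zorn's lemma there is a maximal partial character; it is total, which gives a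
  character \<open>r : G \<rightarrow> \<int>/k\<close> with \<open>r h = 1\<close>.\<close>
lemma character_exists:
  "\<exists>r. (\<forall>x\<in>carrier G. r x < k) \<and>
       (\<forall>x\<in>carrier G. \<forall>y\<in>carrier G. r (x \<otimes> y) = (r x + r y) mod k) \<and> r h = 1 mod k"
proof -
  have "\<exists>M\<in>{\<Gamma>. char_graph \<Gamma>}. \<forall>\<Gamma>\<in>{\<Gamma>. char_graph \<Gamma>}. M \<subseteq> \<Gamma> \<longrightarrow> \<Gamma> = M"
  proof (rule Zorn_Lemma2, intro ballI)
    fix C assume C: "C \<in> chains {\<Gamma>. char_graph \<Gamma>}"
    show "\<exists>U\<in>{\<Gamma>. char_graph \<Gamma>}. \<forall>\<Gamma>\<in>C. \<Gamma> \<subseteq> U"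
    proof (cases "C = {}")
      case True thus ?thesis using cyclic_char_graph by blast
    next
      case False thus ?thesis using chain_union_char_graph[OF C] by blast
    qed
  qed
  then obtain M where M: "char_graph M" and max: "\<And>\<Gamma>. char_graph \<Gamma> \<Longrightarrow> M \<subseteq> \<Gamma> \<Longrightarrow> \<Gamma> = M"
    by blast
  have total: "x \<in> Domain M" if "x \<in> carrier G" for x
  proof -
    from graph_extend[OF M that]
    obtain M' where M': "char_graph M'" "M \<subseteq> M'" "x \<in> Domain M'" by blast
    thus ?thesis using max[OF M'(1,2)] by simp
  qed
  define r where "r y = (THE u. (y, u) \<in> M)" for y
  have r_eq: "r y = u" if yu: "(y, u) \<in> M" for y u
    unfolding r_def by (rule the_equality, rule yu, rule graph_functional[OF M _ yu])
  have rM: "(y, r y) \<in> M" if y: "y \<in> carrier G" for y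
  proof -
    obtain u where "(y, u) \<in> M" using total[OF y] by blast
    thus ?thesis using r_eq by simp
  qed
  show ?thesis
  proof (intro exI[of _ r] conjI ballI)
    fix y assume "y \<in> carrier G" thus "r y < k" using graph_closed[OF M rM] by blast
  next
    fix y z assume "y \<in> carrier G" "z \<in> carrier G"
    thus "r (y \<otimes> z) = (r y + r z) mod k" by (intro r_eq graph_mult[OF M rM rM])
  next
    show "r h = 1 mod k" by (rule r_eq[OF graph_gen[OF M]])
  qed
qed

lemma hom_from_generator:
  assumes M: "group M" and a: "a \<in> carrier M" "a [^]\<^bsub>M\<^esub> k = \<one>\<^bsub>M\<^esub>"
  shows "\<exists>\<psi>. \<psi> \<in> hom G M \<and> \<psi> h = a \<and> (\<forall>x\<in>carrier G. \<exists>i::nat. \<psi> x = a [^]\<^bsub>M\<^esub> i)"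
proof -
  interpret M: group M by (rule M)
  obtain r where r: "\<forall>x\<in>carrier G. \<forall>y\<in>carrier G. r (x \<otimes> y) = (r x + r y) mod k"
    "r h = 1 mod k"
    using character_exists by blast
  define \<psi> where "\<psi> x = a [^]\<^bsub>M\<^esub> r x" for x
  have "\<psi> \<in> hom G M"
  proof (rule homI)
    fix x assume "x \<in> carrier G" thus "\<psi> x \<in> carrier M" using a \<psi>_def by simp
  next
    fix x y assume xy: "x \<in> carrier G" "y \<in> carrier G"
    have "\<psi> (x \<otimes> y) = a [^]\<^bsub>M\<^esub> ((r x + r y) mod k)" using r(1) xy \<psi>_def by simp
    also have "\<dots> = a [^]\<^bsub>M\<^esub> (r x + r y)" by (rule M.pow_mod_exp[OF a, symmetric])
    also have "\<dots> = \<psi> x \<otimes>\<^bsub>M\<^esub> \<psi> y" using a \<psi>_def by (simp add: M.nat_pow_mult)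
    finally show "\<psi> (x \<otimes> y) = \<psi> x \<otimes>\<^bsub>M\<^esub> \<psi> y" .
  qed
  moreover have "\<psi> h = a"
  proof -
    have "\<psi> h = a [^]\<^bsub>M\<^esub> (1 mod k)" using r(2) \<psi>_def by simp
    also have "\<dots> = a [^]\<^bsub>M\<^esub> (1::nat)" by (rule M.pow_mod_exp[OF a, symmetric])
    finally show ?thesis using a(1) by simp
  qed
  ultimately show ?thesis using \<psi>_def by blast
qed

end

lemma subgroup_nat_pow [simp]: "x [^]\<^bsub>A\<lparr>carrier := H\<rparr>\<^esub> (n::nat) = x [^]\<^bsub>A\<^esub> n"
  by (simp add: nat_pow_def)

lemma (in comm_group) subgroup_comm_group:
  assumes H: "subgroup H G" shows "comm_group (G\<lparr>carrier := H\<rparr>)"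
proof (rule group.group_comm_groupI)
  show "group (G\<lparr>carrier := H\<rparr>)" by (rule subgroup.subgroup_is_group[OF H is_group])
  fix x y assume "x \<in> carrier (G\<lparr>carrier := H\<rparr>)" "y \<in> carrier (G\<lparr>carrier := H\<rparr>)"
  thus "x \<otimes>\<^bsub>G\<lparr>carrier := H\<rparr>\<^esub> y = y \<otimes>\<^bsub>G\<lparr>carrier := H\<rparr>\<^esub> x"
    using subgroup.subset[OF H] m_comm by auto
qed

lemma (in comm_group) torsion_subgroup_is_subgroup: "subgroup (torsion_subgroup G k) G"
  unfolding torsion_subgroup_def
  by (rule subgroupI) (auto simp: nat_pow_inv nat_pow_distrib)

text \<open>For inclusions this is exactly the cellular cover
  condition: the map \<open>Hom(H,H) \<rightarrow> Hom(H,A)\<close> is always injective, and it is surjective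
  precisely when every \<open>H \<rightarrow> A\<close> factors through \<open>H\<close>.\<close>
definition hom_closed :: "'a set \<Rightarrow> ('a, 'n) monoid_scheme \<Rightarrow> bool" where
  "hom_closed H A \<longleftrightarrow> (\<forall>g \<in> hom (A\<lparr>carrier := H\<rparr>) A. g ` H \<subseteq> H)"

lemma cellular_inclusion_iff_hom_closed:
  assumes A: "group A" and H: "subgroup H A"
  shows "cellular_cover (A\<lparr>carrier := H\<rparr>) A id \<longleftrightarrow> hom_closed H A"
proof -
  let ?H = "A\<lparr>carrier := H\<rparr>"
  interpret H: group ?H by (rule subgroup.subgroup_is_group[OF H A])
  have id_hom: "id \<in> hom ?H A" using subgroup.subset[OF H] unfolding hom_def by auto
  have compose_id: "(\<lambda>f. restrict (\<lambda>x. id (f x)) H) = (\<lambda>f. restrict f H)" by simp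
  show ?thesis
  proof
    assume "cellular_cover ?H A id"
    hence surj: "(\<lambda>f. restrict f H) ` (hom ?H ?H \<inter> extensional H) = hom ?H A \<inter> extensional H"
      unfolding cellular_cover_def compose_id by (simp add: bij_betw_def)
    show "hom_closed H A"
      unfolding hom_closed_def
    proof (intro ballI subsetI)
      fix g y assume g: "g \<in> hom ?H A" and "y \<in> g ` H"
      then obtain x where x: "x \<in> H" "y = g x" by blast
      have "restrict g H \<in> hom ?H A" by (rule H.hom_restrict[OF g]) simp
      hence "restrict g H \<in> (\<lambda>f. restrict f H) ` (hom ?H ?H \<inter> extensional H)"
        using surj restrict_extensional[of g H] by blast
      then obtain f where f: "f \<in> hom ?H ?H" "restrict g H = restrict f H" by auto
      have "f \<in> H \<rightarrow> H" using f(1) unfolding hom_def by simp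
      hence "f x \<in> H" using x(1) by (rule funcset_mem)
      moreover have "f x = g x" using fun_cong[OF f(2), of x] x by simp
      ultimately show "y \<in> H" using x by simp
    qed
  next
    assume closed: "hom_closed H A"
    have "hom ?H ?H = hom ?H A"
    proof
      show "hom ?H ?H \<subseteq> hom ?H A" using subgroup.subset[OF H] unfolding hom_def by auto
      show "hom ?H A \<subseteq> hom ?H ?H" using closed unfolding hom_closed_def hom_def by auto
    qed
    moreover have "bij_betw (\<lambda>f. restrict f H) (hom ?H ?H \<inter> extensional H) (hom ?H ?H \<inter> extensional H)"
      by (rule bij_betw_cong[THEN iffD2, OF _ bij_betw_id]) (simp add: extensional_restrict)
    ultimately show "cellular_cover ?H A id"
      unfolding cellular_cover_def compose_id using id_hom by simp
  qed
qed

text \<open>Torsion subgroups are closed under homomorphisms, since homomorphisms preserve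
  the equation \<open>x\<^sup>k = 1\<close>.\<close>
lemma (in comm_group) torsion_subgroup_hom_closed: "hom_closed (torsion_subgroup G k) G"
  unfolding hom_closed_def
proof (intro ballI subsetI)
  let ?T = "G\<lparr>carrier := torsion_subgroup G k\<rparr>"
  interpret T: group ?T
    by (rule subgroup.subgroup_is_group[OF torsion_subgroup_is_subgroup is_group])
  fix g y assume g: "g \<in> hom ?T G" and "y \<in> g ` torsion_subgroup G k"
  then obtain x where x: "x \<in> torsion_subgroup G k" "y = g x" by blast
  have "g x [^] k = g (x [^]\<^bsub>?T\<^esub> k)"
    using hom_nat_pow[OF g _ T.is_group is_group] x by simp
  also have "\<dots> = g \<one>\<^bsub>?T\<^esub>" using x unfolding torsion_subgroup_def by simp
  also have "\<dots> = \<one>" using hom_one[OF g T.is_group is_group] .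
  moreover have "g x \<in> carrier G" using g x unfolding hom_def by auto
  ultimately show "y \<in> torsion_subgroup G k" using x unfolding torsion_subgroup_def by simp
qed

text \<open>Conversely, a finite subgroup closed under homomorphisms is the torsion subgroup
  for its exponent \<open>k\<close>: it contains an element \<open>h\<close> of order \<open>k\<close>, and any \<open>a\<close> with
  \<open>a\<^sup>k = 1\<close> is the image of \<open>h\<close> under some homomorphism \<open>H \<rightarrow> G\<close>.\<close>
lemma (in comm_group) hom_closed_is_torsion:
  assumes H: "subgroup H G" and fin: "finite H" and closed: "hom_closed H G"
  shows "\<exists>k::nat. k \<ge> 1 \<and> H = torsion_subgroup G k"
proof -
  let ?H = "G\<lparr>carrier := H\<rparr>"
  interpret H: comm_group ?H by (rule subgroup_comm_group[OF H])
  have "order ?H > 0" using fin H.one_closed unfolding order_def by (auto simp: card_gt_0_iff)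
  then obtain h where h: "h \<in> H" and exp: "\<forall>x\<in>H. x [^] H.ord h = \<one>"
    using H.exponent_attained[of "order ?H"] H.pow_order_eq_1 fin by auto
  define k where "k = H.ord h"
  have k: "k \<ge> 1" using H.ord_ge_1[of h] fin h k_def by simp
  interpret gen: exponent_generator ?H k h
    using k exp h k_def by unfold_locales auto
  have "torsion_subgroup G k \<subseteq> H"
  proof
    fix a assume "a \<in> torsion_subgroup G k"
    hence a: "a \<in> carrier G" "a [^] k = \<one>" unfolding torsion_subgroup_def by auto
    obtain \<psi> where "\<psi> \<in> hom ?H G" "\<psi> h = a" using gen.hom_from_generator[OF is_group a] by blast
    thus "a \<in> H" using closed h unfolding hom_closed_def by blast
  qed
  moreover have "H \<subseteq> torsion_subgroup G k"
    using exp subgroup.subset[OF H] unfolding torsion_subgroup_def k_def by auto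
  ultimately show ?thesis using k by blast
qed

locale abelian_cellular_cover =
  A: comm_group A + B: group B
  for A :: "('a, 'n) monoid_scheme" (structure) and B :: "('b, 'm) monoid_scheme" (structure) +
  fixes c :: "'b \<Rightarrow> 'a"
  assumes cover: "cellular_cover B A c"
begin

lemma cover_hom: "c \<in> hom B A"
  using cover unfolding cellular_cover_def by simp

sublocale group_hom B A c
  using cover_hom by unfold_locales

lemma endo_unique:
  assumes f: "f \<in> hom B B" and g: "g \<in> hom B B"
    and eq: "\<And>x. x \<in> carrier B \<Longrightarrow> c (f x) = c (g x)" and x: "x \<in> carrier B"
  shows "f x = g x"
proof -
  have inj: "inj_on (\<lambda>f. restrict (\<lambda>x. c (f x)) (carrier B)) (hom B B \<inter> extensional (carrier B))"
    using cover unfolding cellular_cover_def by (simp add: bij_betw_def)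
  have "restrict f (carrier B) \<in> hom B B" "restrict g (carrier B) \<in> hom B B"
    by (rule B.hom_restrict[OF f], simp) (rule B.hom_restrict[OF g], simp)
  moreover have "restrict (\<lambda>x. c (restrict f (carrier B) x)) (carrier B)
      = restrict (\<lambda>x. c (restrict g (carrier B) x)) (carrier B)"
    using eq by (auto simp: restrict_def)
  ultimately have "restrict f (carrier B) = restrict g (carrier B)"
    using inj_onD[OF inj] by auto
  thus ?thesis using fun_cong[of _ _ x] x by (metis restrict_apply')
qed

lemma hom_lift:
  assumes g: "g \<in> hom B A"
  shows "\<exists>f\<in>hom B B. \<forall>x\<in>carrier B. c (f x) = g x"
proof -
  have "restrict g (carrier B) \<in> hom B A" by (rule B.hom_restrict[OF g]) simp
  hence "restrict g (carrier B) \<in>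
      (\<lambda>f. restrict (\<lambda>x. c (f x)) (carrier B)) ` (hom B B \<inter> extensional (carrier B))"
    using cover restrict_extensional[of g "carrier B"]
    unfolding cellular_cover_def bij_betw_def by blast
  then obtain f where "f \<in> hom B B" "restrict (\<lambda>x. c (f x)) (carrier B) = restrict g (carrier B)"
    by auto
  thus ?thesis by (metis restrict_apply')
qed

text \<open>The domain of the cover is abelian: conjugation by \<open>x\<close> becomes trivial after
  composing with \<open>c\<close>, because \<open>A\<close> is abelian, so it is the identity.\<close>
lemma domain_comm_group: "comm_group B"
proof (rule B.group_comm_groupI)
  fix x y assume x: "x \<in> carrier B" and y: "y \<in> carrier B"
  let ?conj = "\<lambda>z. x \<otimes>\<^bsub>B\<^esub> z \<otimes>\<^bsub>B\<^esub> inv\<^bsub>B\<^esub> x"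
  have cancel: "inv\<^bsub>B\<^esub> x \<otimes>\<^bsub>B\<^esub> (x \<otimes>\<^bsub>B\<^esub> w) = w" if "w \<in> carrier B" for w
    using that x by (simp add: B.m_assoc[symmetric])
  have "?conj \<in> hom B B"
    using x by (intro homI) (simp_all add: B.m_assoc cancel)
  moreover have "(\<lambda>z. z) \<in> hom B B" by (intro homI) simp_all
  moreover have "c (?conj z) = c z" if z: "z \<in> carrier B" for z
    using x z by (simp add: hom_inv A.m_assoc A.m_lcomm[of "c x" "c z"])
  ultimately have "?conj y = y" using endo_unique y by blast
  thus "x \<otimes>\<^bsub>B\<^esub> y = y \<otimes>\<^bsub>B\<^esub> x"
    using x y by (metis B.inv_solve_right B.m_closed B.inv_closed B.inv_inv)
qed

text \<open>Raising to the power \<open>|A|\<close> is an endomorphism of the abelian group \<open>B\<close> whose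
  composite with \<open>c\<close> is trivial; hence it is trivial: the exponent of \<open>B\<close> divides \<open>|A|\<close>.\<close>
lemma domain_exponent:
  assumes fin: "finite (carrier A)" and y: "y \<in> carrier B"
  shows "y [^]\<^bsub>B\<^esub> order A = \<one>\<^bsub>B\<^esub>"
proof -
  interpret cB: comm_group B by (rule domain_comm_group)
  have "(\<lambda>z. z [^]\<^bsub>B\<^esub> order A) \<in> hom B B" by (intro homI) (simp_all add: cB.nat_pow_distrib)
  moreover have "(\<lambda>z. \<one>\<^bsub>B\<^esub>) \<in> hom B B" by (intro homI) simp_all
  moreover have "c (z [^]\<^bsub>B\<^esub> order A) = c \<one>\<^bsub>B\<^esub>" if "z \<in> carrier B" for z
    using that fin by (simp add: hom_nat_pow A.pow_order_eq_1)
  ultimately show ?thesis using endo_unique[of _ "\<lambda>z. \<one>\<^bsub>B\<^esub>"] y by blast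
qed

text \<open>Pick \<open>h \<in> B\<close> whose order \<open>k\<close> is the exponent of \<open>B\<close>.  For
  \<open>y\<close> in the kernel some endomorphism of \<open>B\<close> sends \<open>h\<close> to \<open>y\<close> and takes values in
  \<open>\<langle>y\<rangle> \<subseteq> ker c\<close>; its composite with \<open>c\<close> is trivial, so it is trivial and \<open>y = 1\<close>.\<close>
lemma cover_inj:
  assumes fin: "finite (carrier A)"
  shows "inj_on c (carrier B)"
proof -
  interpret cB: comm_group B by (rule domain_comm_group)
  have "order A > 0" using fin A.one_closed unfolding order_def by (auto simp: card_gt_0_iff)
  then obtain h where h: "h \<in> carrier B" and exp: "\<forall>x\<in>carrier B. x [^]\<^bsub>B\<^esub> B.ord h = \<one>\<^bsub>B\<^esub>"
    using cB.exponent_attained domain_exponent[OF fin] by blast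
  have "B.ord h dvd order A" using domain_exponent[OF fin h] B.pow_eq_id[OF h] by simp
  hence "B.ord h > 0" using \<open>order A > 0\<close> by (simp add: dvd_pos_nat)
  then interpret gen: exponent_generator B "B.ord h" h using exp h by unfold_locales auto
  show ?thesis unfolding inj_on_one_iff
  proof (intro allI impI)
    fix y assume y: "y \<in> carrier B" and cy: "c y = \<one>\<^bsub>A\<^esub>"
    obtain \<psi> where \<psi>: "\<psi> \<in> hom B B" "\<psi> h = y" "\<forall>x\<in>carrier B. \<exists>i::nat. \<psi> x = y [^]\<^bsub>B\<^esub> i"
      using gen.hom_from_generator[OF B.is_group y] exp y by blast
    have "(\<lambda>z. \<one>\<^bsub>B\<^esub>) \<in> hom B B" by (intro homI) simp_all
    moreover have "c (\<psi> x) = c \<one>\<^bsub>B\<^esub>" if "x \<in> carrier B" for x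
      using \<psi>(3) that y cy by (auto simp: hom_nat_pow)
    ultimately have "\<psi> h = \<one>\<^bsub>B\<^esub>" using endo_unique[OF \<psi>(1)] h by blast
    thus "y = \<one>\<^bsub>B\<^esub>" using \<psi>(2) by simp
  qed
qed

text \<open>The image of the cover is closed under homomorphisms into \<open>A\<close>: a homomorphism
  \<open>g\<close> on \<open>c(B)\<close> lifts, after composing with \<open>c\<close>, to an endomorphism \<open>f\<close> of \<open>B\<close>
  with \<open>g \<circ> c = c \<circ> f\<close>.\<close>
lemma image_hom_closed: "hom_closed (c ` carrier B) A"
  unfolding hom_closed_def
proof (intro ballI subsetI)
  fix g y assume g: "g \<in> hom (A\<lparr>carrier := c ` carrier B\<rparr>) A" and "y \<in> g ` c ` carrier B"
  then obtain b where b: "b \<in> carrier B" "y = g (c b)" by blast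
  have "(\<lambda>x. g (c x)) \<in> hom B A"
    using g by (intro homI) (auto simp: hom_def Pi_iff)
  then obtain f where "f \<in> hom B B" "\<forall>x\<in>carrier B. c (f x) = g (c x)" using hom_lift by blast
  hence "y = c (f b)" "f b \<in> carrier B" using b unfolding hom_def by auto
  thus "y \<in> c ` carrier B" by blast
qed

end

theorem proposition4p5:
  fixes A :: "('a, 'n) monoid_scheme"
  assumes "comm_group A" and "finite (carrier A)"
  shows "(\<forall>H. subgroup H A \<longrightarrow>
            (cellular_cover (A\<lparr>carrier := H\<rparr>) A id \<longleftrightarrow>
             (\<exists>k::nat. k \<ge> 1 \<and> H = torsion_subgroup A k)))
       \<and> (\<forall>(B :: ('b, 'm) monoid_scheme) c. group B \<longrightarrow> cellular_cover B A c \<longrightarrow>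
            (\<exists>k::nat. k \<ge> 1 \<and>
              (\<exists>h. h \<in> iso B (A\<lparr>carrier := torsion_subgroup A k\<rparr>) \<and>
                   (\<forall>x \<in> carrier B. id (h x) = c x))))"
proof (intro conjI allI impI)
  interpret A: comm_group A by (rule assms(1))
  fix H assume H: "subgroup H A"
  have "finite H" using assms(2) subgroup.subset[OF H] by (rule finite_subset[rotated])
  thus "cellular_cover (A\<lparr>carrier := H\<rparr>) A id \<longleftrightarrow> (\<exists>k::nat. k \<ge> 1 \<and> H = torsion_subgroup A k)"
    using cellular_inclusion_iff_hom_closed[OF A.is_group H] A.hom_closed_is_torsion[OF H]
      A.torsion_subgroup_hom_closed by blast
next
  fix B :: "('b, 'm) monoid_scheme" and c
  assume "group B" "cellular_cover B A c"
  then interpret abelian_cellular_cover A B c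
    using assms(1) by (simp add: abelian_cellular_cover_def abelian_cellular_cover_axioms_def)
  have "finite (c ` carrier B)" using assms(2) hom_closed subgroup.subset[OF img_is_subgroup]
    by (metis finite_subset)
  then obtain k :: nat where k: "k \<ge> 1" "c ` carrier B = torsion_subgroup A k"
    using A.hom_closed_is_torsion[OF img_is_subgroup _ image_hom_closed] by blast
  have "c \<in> iso B (A\<lparr>carrier := c ` carrier B\<rparr>)"
    using cover_inj[OF assms(2)] cover_hom unfolding iso_def hom_def bij_betw_def by auto
  thus "\<exists>k::nat. k \<ge> 1 \<and> (\<exists>h. h \<in> iso B (A\<lparr>carrier := torsion_subgroup A k\<rparr>) \<and>
                   (\<forall>x \<in> carrier B. id (h x) = c x))"
    using k by auto
qed

end
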